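(* Let $\bm v_1,\dots,\bm v_N\in\mathbb{R}^r$, $\bm X := \mathsf{Gram}(\bm v_1,\dots,\bm v_N)$, and $\bm v := (\bm v_1;\dots;\bm v_N)\in\mathbb{R}^{rN}$. (a) If $\sum_{i=1}^N\|\bm v_i\|_2^2 = N$ and there exists $\bm M\in\mathcal{B}(N,r)$ with $\mathrm{rank}(\bm M) = r$ and $\bm v^\top\bm M\bm v = N^2$, then $\bm X\in\mathscr{C}^N$. (b) If $N\notin\{1,2\}$ and $N$ is not divisible by $4$, then $\bm I_N\in\mathscr{C}^N$ and $\bm I_N = \mathsf{Gram}(\bm e_1,\dots,\bm e_N)$ (standard basis of $\mathbb{R}^N$), but with $\bm v := (\bm e_1;\dots;\bm e_N)\in\mathbb{R}^{N^2}$ there is no $\bm M\in\mathcal{B}(N,N)$ with $\bm v^\top\bm M\bm v = N^2$ and $\mathrm{rank}(\bm M) = N$.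
   Context: $\mathscr{C}^N := \mathrm{conv}\{\bm x\bm x^\top : \bm x\in\{\pm1\}^N\}$ (the cut polytope). $\mathsf{Gram}$ denotes the Gram matrix, $(\bm v_1;\dots;\bm v_N)$ the concatenation. A matrix $\bm M \in \mathbb{R}^{rN\times rN}$ is viewed as an $N\times N$ array of $r\times r$ blocks, $\bm M_{[ij]}$ denoting block $(i,j)$. $\mathcal{B}(N,r)$ is the set of symmetric $\bm M \in \mathbb{R}^{rN\times rN}$ with $\bm M \succeq 0$, $\bm M_{[ii]} = \bm I_r$ for all $i$, and $\bm M_{[ij]} = \bm M_{[ij]}^\top$ for all $i,j$. *)

theory Defs
  imports "Jordan_Normal_Form.DL_Rank"
begin

text \<open>Vectors/matrices are Jordan_Normal_Form vec/mat; indices are 0-based.\<close>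

definition gram_mat :: "nat \<Rightarrow> (nat \<Rightarrow> real vec) \<Rightarrow> real mat" where
  "gram_mat N v = mat N N (\<lambda>(i,j). v i \<bullet> v j)"

definition concat_vecs :: "nat \<Rightarrow> nat \<Rightarrow> (nat \<Rightarrow> real vec) \<Rightarrow> real vec" where
  "concat_vecs r N v = vec (r * N) (\<lambda>k. v (k div r) $ (k mod r))"

definition sign_vecs :: "nat \<Rightarrow> real vec set" where
  "sign_vecs N = {x. x \<in> carrier_vec N \<and> (\<forall>i<N. x $ i = 1 \<or> x $ i = -1)}"

text \<open>Cut polytope: convex hull of the (finitely many) matrices x x^T, x in {+-1}^N,
  written as the set of convex combinations of all of these points.\<close>
definition cut_polytope :: "nat \<Rightarrow> real mat set" where
  "cut_polytope N = {X. X \<in> carrier_mat N N \<and>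
     (\<exists>w :: real vec \<Rightarrow> real. (\<forall>x \<in> sign_vecs N. 0 \<le> w x) \<and>
        (\<Sum>x \<in> sign_vecs N. w x) = 1 \<and>
        (\<forall>i<N. \<forall>j<N. X $$ (i,j) = (\<Sum>x \<in> sign_vecs N. w x * (x $ i * x $ j))))}"

definition psd_mat :: "real mat \<Rightarrow> bool" where
  "psd_mat M \<longleftrightarrow> M \<in> carrier_mat (dim_row M) (dim_row M) \<and>
     (\<forall>x \<in> carrier_vec (dim_row M). 0 \<le> x \<bullet> (M *\<^sub>v x))"

definition block_mat :: "nat \<Rightarrow> real mat \<Rightarrow> nat \<Rightarrow> nat \<Rightarrow> real mat" where
  "block_mat r M i j = mat r r (\<lambda>(a,b). M $$ (i * r + a, j * r + b))"

definition B_set :: "nat \<Rightarrow> nat \<Rightarrow> real mat set" where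
  "B_set N r = {M. M \<in> carrier_mat (r * N) (r * N) \<and> transpose_mat M = M \<and> psd_mat M \<and>
     (\<forall>i<N. block_mat r M i i = 1\<^sub>m r) \<and>
     (\<forall>i<N. \<forall>j<N. transpose_mat (block_mat r M i j) = block_mat r M i j)}"

definition mat_rank :: "real mat \<Rightarrow> nat" where
  "mat_rank M = vec_space.rank (dim_row M) (M :: real mat)"

end

theory Submission
  imports Defs "Jordan_Normal_Form.DL_Rank_Submatrix"
begin

text \<open>
  The first block row \<open>C = (S\<^sub>1 \<dots> S\<^sub>N)\<close> of a rank-\<open>r\<close> matrix \<open>M \<in> \<B>(N, r)\<close> satisfies
  \<open>M = C\<^sup>T C\<close>, and the block conditions make the \<open>S\<^sub>i\<close> pairwise commuting symmetric involutions.
  Hence \<open>v\<^sup>T M v = \<parallel>\<Sum>\<^sub>i S\<^sub>i v\<^sub>i\<parallel>\<^sup>2 \<le> N \<Sum>\<^sub>i \<parallel>v\<^sub>i\<parallel>\<^sup>2 = N\<^sup>2\<close>, and equality forces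
  \<open>S\<^sub>i v\<^sub>i = u\<close> for one unit vector \<open>u\<close>, i.e. \<open>v\<^sub>i = S\<^sub>i u\<close> and \<open>X\<^sub>i\<^sub>j = u\<^sup>T S\<^sub>i S\<^sub>j u\<close>.
  Decomposing \<open>u\<close> along the joint \<open>\<pm>1\<close>-eigenspaces of the \<open>S\<^sub>i\<close> writes \<open>X\<close> as a convex
  combination of the sign patterns \<open>x x\<^sup>T\<close>.

  If moreover \<open>S\<^sub>i u = e\<^sub>i\<close>, then \<open>P = (I + S\<^sub>1S\<^sub>2)/2 \<cdot> (I + S\<^sub>1S\<^sub>3)/2\<close> is an orthogonal projection
  commuting with every \<open>S\<^sub>i\<close>, all of whose diagonal entries equal \<open>u\<^sup>T P u = 1/4\<close>;
  its trace \<open>N/4\<close> is then an integer.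
\<close>

section \<open>Vectors and matrices as functions\<close>

text \<open>A vector of \<open>\<real>\<^sup>n\<close> is a function \<open>nat \<Rightarrow> real\<close> and an \<open>n \<times> n\<close> matrix a function
  \<open>nat \<Rightarrow> nat \<Rightarrow> real\<close>; entries with an index \<open>\<ge> n\<close> are junk and every notion below ignores them.\<close>

definition dot :: "nat \<Rightarrow> (nat \<Rightarrow> real) \<Rightarrow> (nat \<Rightarrow> real) \<Rightarrow> real" where
  "dot n x y = (\<Sum>k<n. x k * y k)"

definition matvec :: "nat \<Rightarrow> (nat \<Rightarrow> nat \<Rightarrow> real) \<Rightarrow> (nat \<Rightarrow> real) \<Rightarrow> nat \<Rightarrow> real" where
  "matvec n A x = (\<lambda>a. \<Sum>b<n. A a b * x b)"

definition matmul :: "nat \<Rightarrow> (nat \<Rightarrow> nat \<Rightarrow> real) \<Rightarrow> (nat \<Rightarrow> nat \<Rightarrow> real) \<Rightarrow> nat \<Rightarrow> nat \<Rightarrow> real" where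
  "matmul n A B = (\<lambda>a b. \<Sum>k<n. A a k * B k b)"

definition idmat :: "nat \<Rightarrow> nat \<Rightarrow> real" where
  "idmat a b = (if a = b then 1 else 0)"

lemma dot_commute: "dot n x y = dot n y x"
  unfolding dot_def by (simp add: mult.commute)

lemma dot_cong: "(\<And>a. a < n \<Longrightarrow> x a = x' a) \<Longrightarrow> (\<And>a. a < n \<Longrightarrow> y a = y' a) \<Longrightarrow> dot n x y = dot n x' y'"
  unfolding dot_def by (intro sum.cong) auto

lemma dot_lincomb_left: "dot n (\<lambda>a. c * x a + d * y a) z = c * dot n x z + d * dot n y z"
  unfolding dot_def by (simp add: algebra_simps sum.distrib sum_distrib_left)

lemma dot_lincomb_right: "dot n z (\<lambda>a. c * x a + d * y a) = c * dot n z x + d * dot n z y"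
  using dot_lincomb_left[of n c x d y z] by (simp add: dot_commute)

lemma dot_self_nonneg: "0 \<le> dot n x x"
  unfolding dot_def by (intro sum_nonneg) simp

lemma dot_idmat: "a < n \<Longrightarrow> dot n (idmat a) x = x a"
  unfolding dot_def idmat_def by (simp add: if_distrib[of "\<lambda>c. c * _"] cong: if_cong)

lemma dot_vec_index: "x \<in> carrier_vec n \<Longrightarrow> y \<in> carrier_vec n \<Longrightarrow> x \<bullet> y = dot n (($) x) (($) y)"
  unfolding scalar_prod_def dot_def by (simp add: lessThan_atLeast0)

lemma matvec_lincomb: "matvec n A (\<lambda>a. c * x a + d * y a) = (\<lambda>a. c * matvec n A x a + d * matvec n A y a)"
  unfolding matvec_def by (simp add: algebra_simps sum.distrib sum_distrib_left)

lemma matvec_cong: "(\<And>a. a < n \<Longrightarrow> x a = y a) \<Longrightarrow> matvec n A x = matvec n A y"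
  unfolding matvec_def by (intro ext sum.cong) auto

lemma matvec_cong_mat:
  "(\<And>b. b < n \<Longrightarrow> A a b = B a b) \<Longrightarrow> matvec n A x a = matvec n B x a"
  unfolding matvec_def by (intro sum.cong) auto

lemma matvec_matmul: "matvec n (matmul n A B) x = matvec n A (matvec n B x)"
proof
  fix a
  have "matvec n (matmul n A B) x a = (\<Sum>b<n. \<Sum>k<n. A a k * B k b * x b)"
    unfolding matvec_def matmul_def by (simp add: sum_distrib_right)
  also have "\<dots> = (\<Sum>k<n. \<Sum>b<n. A a k * B k b * x b)" by (rule sum.swap)
  also have "\<dots> = matvec n A (matvec n B x) a"
    unfolding matvec_def by (simp add: sum_distrib_left mult.assoc)
  finally show "matvec n (matmul n A B) x a = matvec n A (matvec n B x) a" .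
qed

lemma matvec_idmat: "a < n \<Longrightarrow> matvec n idmat x a = x a"
  using dot_idmat[of a n x] unfolding dot_def matvec_def by simp

lemma matvec_idmat_col: "b < n \<Longrightarrow> matvec n A (idmat b) a = A a b"
  unfolding matvec_def idmat_def by (simp add: if_distrib[of "\<lambda>c. _ * c"] cong: if_cong)

lemma dot_matvec_idmat: "dot n x (matvec n idmat y) = dot n x y"
  by (rule dot_cong) (simp_all add: matvec_idmat)

definition self_adjoint_mat :: "nat \<Rightarrow> (nat \<Rightarrow> nat \<Rightarrow> real) \<Rightarrow> bool" where
  "self_adjoint_mat n A \<longleftrightarrow> (\<forall>x y. dot n (matvec n A x) y = dot n x (matvec n A y))"

definition commuting_mat :: "nat \<Rightarrow> (nat \<Rightarrow> nat \<Rightarrow> real) \<Rightarrow> (nat \<Rightarrow> nat \<Rightarrow> real) \<Rightarrow> bool" where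
  "commuting_mat n A B \<longleftrightarrow> (\<forall>x. \<forall>a<n. matvec n A (matvec n B x) a = matvec n B (matvec n A x) a)"

definition involutive_mat :: "nat \<Rightarrow> (nat \<Rightarrow> nat \<Rightarrow> real) \<Rightarrow> bool" where
  "involutive_mat n A \<longleftrightarrow> (\<forall>x. \<forall>a<n. matvec n A (matvec n A x) a = x a)"

definition idempotent_mat :: "nat \<Rightarrow> (nat \<Rightarrow> nat \<Rightarrow> real) \<Rightarrow> bool" where
  "idempotent_mat n A \<longleftrightarrow> (\<forall>x. \<forall>a<n. matvec n A (matvec n A x) a = matvec n A x a)"

lemma self_adjoint_matD: "self_adjoint_mat n A \<Longrightarrow> dot n (matvec n A x) y = dot n x (matvec n A y)"
  unfolding self_adjoint_mat_def by blast

lemma commuting_matD: "commuting_mat n A B \<Longrightarrow> a < n \<Longrightarrow> matvec n A (matvec n B x) a = matvec n B (matvec n A x) a"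
  unfolding commuting_mat_def by blast

lemma involutive_matD: "involutive_mat n A \<Longrightarrow> a < n \<Longrightarrow> matvec n A (matvec n A x) a = x a"
  unfolding involutive_mat_def by blast

lemma idempotent_matD: "idempotent_mat n A \<Longrightarrow> a < n \<Longrightarrow> matvec n A (matvec n A x) a = matvec n A x a"
  unfolding idempotent_mat_def by blast

lemma commuting_mat_sym: "commuting_mat n A B \<Longrightarrow> commuting_mat n B A"
  unfolding commuting_mat_def by metis

lemma commuting_mat_refl: "commuting_mat n A A"
  unfolding commuting_mat_def by simp

lemma self_adjoint_mat_if_symmetric:
  assumes "\<And>a b. a < n \<Longrightarrow> b < n \<Longrightarrow> A a b = A b a"
  shows "self_adjoint_mat n A"
  unfolding self_adjoint_mat_def
proof (intro allI)
  fix x y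
  have "dot n (matvec n A x) y = (\<Sum>k<n. \<Sum>b<n. A k b * x b * y k)"
    unfolding dot_def matvec_def by (simp add: sum_distrib_right)
  also have "\<dots> = (\<Sum>b<n. \<Sum>k<n. x b * (A b k * y k))"
    by (subst sum.swap) (use assms in \<open>auto intro!: sum.cong simp: algebra_simps\<close>)
  also have "\<dots> = dot n x (matvec n A y)"
    unfolding dot_def matvec_def by (simp add: sum_distrib_left)
  finally show "dot n (matvec n A x) y = dot n x (matvec n A y)" .
qed

lemma symmetric_if_self_adjoint_mat:
  assumes "self_adjoint_mat n A" "a < n" "b < n"
  shows "A a b = A b a"
proof -
  have "A a b = dot n (idmat a) (matvec n A (idmat b))"
    using assms(2,3) by (simp add: dot_idmat matvec_idmat_col)
  also have "\<dots> = dot n (idmat b) (matvec n A (idmat a))"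
    using self_adjoint_matD[OF assms(1), of "idmat a" "idmat b"] by (simp add: dot_commute)
  also have "\<dots> = A b a"
    using assms(2,3) by (simp add: dot_idmat matvec_idmat_col)
  finally show ?thesis .
qed

lemma commuting_mat_if_matmul_eq:
  assumes "\<And>a b. a < n \<Longrightarrow> b < n \<Longrightarrow> matmul n A B a b = matmul n B A a b"
  shows "commuting_mat n A B"
  unfolding commuting_mat_def
  using matvec_cong_mat[of n "matmul n A B" _ "matmul n B A"] assms by (simp add: matvec_matmul)

lemma involutive_mat_if_matmul_eq_idmat:
  assumes "\<And>a b. a < n \<Longrightarrow> b < n \<Longrightarrow> matmul n A A a b = idmat a b"
  shows "involutive_mat n A"
  unfolding involutive_mat_def
  using matvec_cong_mat[of n "matmul n A A" _ idmat] assms by (simp add: matvec_matmul matvec_idmat)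

lemma matmul_eq_if_idempotent_mat:
  assumes "idempotent_mat n A" "a < n" "b < n"
  shows "matmul n A A a b = A a b"
proof -
  have "matmul n A A a b = matvec n (matmul n A A) (idmat b) a"
    using assms(3) by (simp add: matvec_idmat_col)
  also have "\<dots> = A a b"
    unfolding matvec_matmul using idempotent_matD[OF assms(1,2)] assms(3) by (simp add: matvec_idmat_col)
  finally show ?thesis .
qed

lemma self_adjoint_mat_idmat: "self_adjoint_mat n idmat"
  by (rule self_adjoint_mat_if_symmetric) (simp add: idmat_def)

lemma commuting_mat_idmat: "commuting_mat n idmat A"
  unfolding commuting_mat_def
  by (metis (no_types, lifting) matvec_cong matvec_idmat)

lemma self_adjoint_mat_matmul:
  assumes "self_adjoint_mat n A" "self_adjoint_mat n B" "commuting_mat n A B"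
  shows "self_adjoint_mat n (matmul n A B)"
  unfolding self_adjoint_mat_def matvec_matmul
proof (intro allI)
  fix x y
  have "dot n (matvec n A (matvec n B x)) y = dot n x (matvec n B (matvec n A y))"
    using self_adjoint_matD[OF assms(1)] self_adjoint_matD[OF assms(2)] by metis
  also have "\<dots> = dot n x (matvec n A (matvec n B y))"
    using commuting_matD[OF assms(3)] by (intro dot_cong) simp_all
  finally show "dot n (matvec n A (matvec n B x)) y = dot n x (matvec n A (matvec n B y))" .
qed

lemma commuting_mat_matmul:
  assumes "commuting_mat n A C" "commuting_mat n B C"
  shows "commuting_mat n (matmul n A B) C"
  unfolding commuting_mat_def matvec_matmul
proof (intro allI impI)
  fix x a assume "a < n"
  have "matvec n A (matvec n B (matvec n C x)) = matvec n A (matvec n C (matvec n B x))"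
    using commuting_matD[OF assms(2)] by (intro matvec_cong) simp
  then show "matvec n A (matvec n B (matvec n C x)) a = matvec n C (matvec n A (matvec n B x)) a"
    using commuting_matD[OF assms(1) \<open>a < n\<close>] by simp
qed

lemma involutive_mat_matmul:
  assumes "involutive_mat n A" "involutive_mat n B" "commuting_mat n A B"
  shows "involutive_mat n (matmul n A B)"
  unfolding involutive_mat_def matvec_matmul
proof (intro allI impI)
  fix x a assume a: "a < n"
  have "matvec n A (matvec n B (matvec n A (matvec n B x))) = matvec n A (matvec n A (matvec n B (matvec n B x)))"
    by (rule matvec_cong) (rule commuting_matD[OF assms(3), symmetric])
  then show "matvec n A (matvec n B (matvec n A (matvec n B x))) a = x a"
    using involutive_matD[OF assms(1) a] involutive_matD[OF assms(2) a] by simp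
qed

lemma idempotent_mat_matmul:
  assumes "idempotent_mat n A" "idempotent_mat n B" "commuting_mat n A B"
  shows "idempotent_mat n (matmul n A B)"
  unfolding idempotent_mat_def matvec_matmul
proof (intro allI impI)
  fix x a assume a: "a < n"
  have "matvec n A (matvec n B (matvec n A (matvec n B x))) = matvec n A (matvec n A (matvec n B (matvec n B x)))"
    by (rule matvec_cong) (rule commuting_matD[OF assms(3), symmetric])
  moreover have "matvec n A (matvec n B (matvec n B x)) = matvec n A (matvec n B x)"
    by (rule matvec_cong) (rule idempotent_matD[OF assms(2)])
  ultimately show "matvec n A (matvec n B (matvec n A (matvec n B x))) a = matvec n A (matvec n B x) a"
    using idempotent_matD[OF assms(1) a] by simp
qed

lemma dot_involution_isometry:
  assumes "self_adjoint_mat n S" "involutive_mat n S"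
  shows "dot n (matvec n S x) (matvec n S x) = dot n x x"
proof -
  have "dot n (matvec n S x) (matvec n S x) = dot n x (matvec n S (matvec n S x))"
    using self_adjoint_matD[OF assms(1)] .
  also have "\<dots> = dot n x x"
    using involutive_matD[OF assms(2)] by (intro dot_cong) simp_all
  finally show ?thesis .
qed

lemma dot_conj_involution:
  assumes "self_adjoint_mat n S" "involutive_mat n S" "commuting_mat n P S"
  shows "dot n (matvec n S u) (matvec n P (matvec n S u)) = dot n u (matvec n P u)"
proof -
  have "dot n (matvec n S u) (matvec n P (matvec n S u)) = dot n u (matvec n S (matvec n P (matvec n S u)))"
    using self_adjoint_matD[OF assms(1)] .
  also have "\<dots> = dot n u (matvec n P (matvec n S (matvec n S u)))"
    using commuting_matD[OF assms(3)] by (intro dot_cong) simp_all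
  also have "matvec n P (matvec n S (matvec n S u)) = matvec n P u"
    using involutive_matD[OF assms(2)] by (intro matvec_cong) simp
  finally show ?thesis .
qed

lemma dot_split_by_involution:
  fixes u :: "nat \<Rightarrow> real"
  assumes S: "self_adjoint_mat n S" "involutive_mat n S"
    and A: "self_adjoint_mat n A" "commuting_mat n A S"
  defines "up \<equiv> \<lambda>a. 1/2 * u a + 1/2 * matvec n S u a"
    and "um \<equiv> \<lambda>a. 1/2 * u a + (-1/2) * matvec n S u a"
  shows "dot n up (matvec n A up) + dot n um (matvec n A um) = dot n u (matvec n A u)"
    and "dot n up (matvec n A up) - dot n um (matvec n A um) = dot n u (matvec n A (matvec n S u))"
proof -
  let ?S = "matvec n S" and ?A = "matvec n A"
  have SAS: "dot n (?S u) (?A (?S u)) = dot n u (?A u)"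
  proof -
    have "dot n (?S u) (?A (?S u)) = dot n u (?S (?A (?S u)))" using self_adjoint_matD[OF S(1)] .
    also have "\<dots> = dot n u (?A (?S (?S u)))"
      using commuting_matD[OF A(2)] by (intro dot_cong) simp_all
    also have "?A (?S (?S u)) = ?A u"
      using involutive_matD[OF S(2)] by (intro matvec_cong) simp
    finally show ?thesis .
  qed
  have SA: "dot n (?S u) (?A u) = dot n u (?A (?S u))"
  proof -
    have "dot n (?S u) (?A u) = dot n u (?S (?A u))" using self_adjoint_matD[OF S(1)] .
    also have "\<dots> = dot n u (?A (?S u))"
      using commuting_matD[OF A(2)] by (intro dot_cong) simp_all
    finally show ?thesis .
  qed
  have "dot n up (?A up) = (dot n u (?A u) + 2 * dot n u (?A (?S u)) + dot n (?S u) (?A (?S u))) / 4"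
    and "dot n um (?A um) = (dot n u (?A u) - 2 * dot n u (?A (?S u)) + dot n (?S u) (?A (?S u))) / 4"
    unfolding up_def um_def matvec_lincomb dot_lincomb_left dot_lincomb_right SA
    by (simp_all add: dot_commute[of n u] field_simps)
  then show "dot n up (?A up) + dot n um (?A um) = dot n u (?A u)"
    and "dot n up (?A up) - dot n um (?A um) = dot n u (?A (?S u))"
    using SAS by simp_all
qed

section \<open>Commuting involutions and the cut polytope\<close>

definition vec_snoc :: "nat \<Rightarrow> real vec \<Rightarrow> real \<Rightarrow> real vec" where
  "vec_snoc n x c = vec (Suc n) (\<lambda>i. if i < n then x $ i else c)"

lemma index_vec_snoc: "i < Suc n \<Longrightarrow> vec_snoc n x c $ i = (if i < n then x $ i else c)"
  unfolding vec_snoc_def by simp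

lemma sign_vecs_0: "sign_vecs 0 = {vec 0 (\<lambda>_. 0)}"
  unfolding sign_vecs_def by (auto intro!: eq_vecI)

lemma sign_vecs_Suc: "sign_vecs (Suc n) = (\<lambda>(x, c). vec_snoc n x c) ` (sign_vecs n \<times> {1, -1})"
proof
  show "sign_vecs (Suc n) \<subseteq> (\<lambda>(x, c). vec_snoc n x c) ` (sign_vecs n \<times> {1, -1})"
  proof
    fix y assume y: "y \<in> sign_vecs (Suc n)"
    then have "vec n (($) y) \<in> sign_vecs n" "y $ n \<in> {1, -1}"
      unfolding sign_vecs_def by auto
    moreover have "y = vec_snoc n (vec n (($) y)) (y $ n)"
      using y unfolding sign_vecs_def by (intro eq_vecI) (auto simp: vec_snoc_def less_Suc_eq)
    ultimately show "y \<in> (\<lambda>(x, c). vec_snoc n x c) ` (sign_vecs n \<times> {1, -1})" by force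
  qed
  show "(\<lambda>(x, c). vec_snoc n x c) ` (sign_vecs n \<times> {1, -1}) \<subseteq> sign_vecs (Suc n)"
    unfolding sign_vecs_def vec_snoc_def by (auto simp: less_Suc_eq)
qed

lemma vec_snoc_restrict: "x \<in> sign_vecs n \<Longrightarrow> vec n (($) (vec_snoc n x c)) = x"
  unfolding sign_vecs_def by (intro eq_vecI) (auto simp: index_vec_snoc)

lemma inj_on_vec_snoc: "inj_on (\<lambda>(x, c). vec_snoc n x c) (sign_vecs n \<times> {1, -1})"
proof (rule inj_onI, clarify)
  fix x c x' c' assume "x \<in> sign_vecs n" "x' \<in> sign_vecs n" and eq: "vec_snoc n x c = vec_snoc n x' c'"
  then have "x = x'" using vec_snoc_restrict by metis
  moreover have "c = c'" using arg_cong[OF eq, of "\<lambda>v. v $ n"] by (simp add: index_vec_snoc)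
  ultimately show "x = x' \<and> c = c'" ..
qed

lemma sum_sign_vecs_Suc:
  "(\<Sum>y\<in>sign_vecs (Suc n). g y) = (\<Sum>x\<in>sign_vecs n. g (vec_snoc n x 1) + g (vec_snoc n x (-1)))"
proof -
  have "(\<Sum>y\<in>sign_vecs (Suc n). g y) = (\<Sum>(x, c)\<in>sign_vecs n \<times> {1, -1}. g (vec_snoc n x c))"
    unfolding sign_vecs_Suc by (subst sum.reindex[OF inj_on_vec_snoc]) (simp add: case_prod_unfold)
  also have "\<dots> = (\<Sum>x\<in>sign_vecs n. g (vec_snoc n x 1) + g (vec_snoc n x (-1)))"
    by (simp add: sum.cartesian_product[symmetric])
  finally show ?thesis .
qed

lemma card_sign_vecs: "card (sign_vecs n) = 2 ^ n"
proof (induction n)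
  case (Suc n)
  have "finite (sign_vecs n)"
    by (metis Suc.IH card.infinite power_not_zero zero_neq_numeral)
  then show ?case
    using Suc.IH by (simp add: sign_vecs_Suc card_image[OF inj_on_vec_snoc] card_cartesian_product)
qed (simp add: sign_vecs_0)

lemma sum_sign_vecs_coord_mult:
  "i < n \<Longrightarrow> j < n \<Longrightarrow> (\<Sum>x\<in>sign_vecs n. x $ i * x $ j) = (if i = j then 2 ^ n else 0)"
proof (induction n)
  case (Suc n)
  then show ?case
    unfolding sum_sign_vecs_Suc
    by (cases "i < n"; cases "j < n")
      (auto simp: index_vec_snoc less_Suc_eq sum.distrib[symmetric] sum_distrib_left[symmetric] card_sign_vecs)
qed simp

lemma one_mat_in_cut_polytope: "1\<^sub>m N \<in> cut_polytope N"
  unfolding cut_polytope_def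
  by (intro CollectI conjI exI[of _ "\<lambda>_. 1 / 2 ^ N"])
    (simp_all add: sum_divide_distrib[symmetric] sum_sign_vecs_coord_mult card_sign_vecs)

definition sign_moment_weights ::
    "nat \<Rightarrow> nat \<Rightarrow> (nat \<Rightarrow> nat \<Rightarrow> nat \<Rightarrow> real) \<Rightarrow> (nat \<Rightarrow> real) \<Rightarrow> (real vec \<Rightarrow> real) \<Rightarrow> bool" where
  "sign_moment_weights N r S u w \<longleftrightarrow> (\<forall>x\<in>sign_vecs N. 0 \<le> w x) \<and> (\<Sum>x\<in>sign_vecs N. w x) = dot r u u \<and>
    (\<forall>i<N. (\<Sum>x\<in>sign_vecs N. w x * x $ i) = dot r u (matvec r (S i) u)) \<and>
    (\<forall>i<N. \<forall>j<N. (\<Sum>x\<in>sign_vecs N. w x * (x $ i * x $ j)) = dot r u (matvec r (S i) (matvec r (S j) u)))"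

definition sign_glue :: "nat \<Rightarrow> (real vec \<Rightarrow> real) \<Rightarrow> (real vec \<Rightarrow> real) \<Rightarrow> real vec \<Rightarrow> real" where
  "sign_glue n wp wm y = (if y $ n = 1 then wp (vec n (($) y)) else wm (vec n (($) y)))"

lemma sum_sign_glue:
  "(\<Sum>y\<in>sign_vecs (Suc n). sign_glue n wp wm y * g y) =
    (\<Sum>x\<in>sign_vecs n. wp x * g (vec_snoc n x 1)) + (\<Sum>x\<in>sign_vecs n. wm x * g (vec_snoc n x (-1)))"
  unfolding sum_sign_vecs_Suc sum.distrib[symmetric]
  by (intro sum.cong) (simp_all add: sign_glue_def index_vec_snoc vec_snoc_restrict)

text \<open>Split \<open>u\<close> into its components in the \<open>\<pm>1\<close>-eigenspaces of \<open>S n\<close> and glue the weights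
  of the two halves along the last coordinate.\<close>

lemma sign_moment_weights_Suc:
  fixes u :: "nat \<Rightarrow> real"
  assumes sa: "\<forall>i<Suc n. self_adjoint_mat r (S i)" and inv: "involutive_mat r (S n)"
    and com: "\<forall>i<Suc n. \<forall>j<Suc n. commuting_mat r (S i) (S j)"
    and wp: "sign_moment_weights n r S (\<lambda>a. 1/2 * u a + 1/2 * matvec r (S n) u a) wp"
    and wm: "sign_moment_weights n r S (\<lambda>a. 1/2 * u a + (-1/2) * matvec r (S n) u a) wm"
  shows "sign_moment_weights (Suc n) r S u (sign_glue n wp wm)"
proof -
  let ?S = "\<lambda>i. matvec r (S i)"
  define up where "up = (\<lambda>a. 1/2 * u a + 1/2 * ?S n u a)"
  define um where "um = (\<lambda>a. 1/2 * u a + (-1/2) * ?S n u a)"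
  note wp = wp[folded up_def, unfolded sign_moment_weights_def]
  note wm = wm[folded um_def, unfolded sign_moment_weights_def]
  note split = dot_split_by_involution[where u = u, OF _ inv, folded up_def um_def]
  have Sn: "self_adjoint_mat r (S n)" using sa by simp
  have const: "dot r up up + dot r um um = dot r u u" and lin_n: "dot r up up - dot r um um = dot r u (?S n u)"
    using split[OF Sn self_adjoint_mat_idmat commuting_mat_idmat] by (simp_all add: dot_matvec_idmat)
  have lin: "dot r up (?S i up) + dot r um (?S i um) = dot r u (?S i u)"
    and quad_n: "dot r up (?S i up) - dot r um (?S i um) = dot r u (?S i (?S n u))" if "i < n" for i
    using split[OF Sn] sa com that by simp_all
  have quad: "dot r up (?S i (?S j up)) + dot r um (?S i (?S j um)) = dot r u (?S i (?S j u))"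
    if "i < n" "j < n" for i j
    using split(1)[OF Sn self_adjoint_mat_matmul commuting_mat_matmul] sa com that
    by (simp add: matvec_matmul)
  have sq_n: "dot r u (?S n (?S n u)) = dot r u u"
    using involutive_matD[OF inv] by (intro dot_cong) simp_all
  have swap: "dot r u (?S n (?S i u)) = dot r u (?S i (?S n u))" if "i < n" for i
    using commuting_matD[of r "S n" "S i"] com that by (intro dot_cong) simp_all
  show ?thesis
    unfolding sign_moment_weights_def
  proof (intro conjI allI impI ballI)
    show "0 \<le> sign_glue n wp wm y" if "y \<in> sign_vecs (Suc n)" for y
      using that wp wm by (auto simp: sign_glue_def sign_vecs_def)
    show "(\<Sum>y\<in>sign_vecs (Suc n). sign_glue n wp wm y) = dot r u u"
      using sum_sign_glue[of n wp wm "\<lambda>_. 1"] wp wm const by simp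
    show "(\<Sum>y\<in>sign_vecs (Suc n). sign_glue n wp wm y * y $ i) = dot r u (?S i u)" if "i < Suc n" for i
      using sum_sign_glue[of n wp wm "\<lambda>y. y $ i"] that wp wm lin lin_n
      by (cases "i < n") (auto simp: index_vec_snoc sum_negf less_Suc_eq)
    show "(\<Sum>y\<in>sign_vecs (Suc n). sign_glue n wp wm y * (y $ i * y $ j)) = dot r u (?S i (?S j u))"
      if "i < Suc n" "j < Suc n" for i j
      using sum_sign_glue[of n wp wm "\<lambda>y. y $ i * y $ j"] that wp wm const quad quad_n sq_n swap
      by (cases "i < n"; cases "j < n") (auto simp: index_vec_snoc sum_negf less_Suc_eq)
  qed
qed

lemma sign_moment_weights_exist:
  assumes "\<forall>i<N. self_adjoint_mat r (S i)" "\<forall>i<N. involutive_mat r (S i)"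
    and "\<forall>i<N. \<forall>j<N. commuting_mat r (S i) (S j)"
  shows "\<exists>w. sign_moment_weights N r S u w"
  using assms
proof (induction N arbitrary: u)
  case 0
  show ?case
    by (intro exI[of _ "\<lambda>_. dot r u u"]) (simp add: sign_moment_weights_def sign_vecs_0 dot_self_nonneg)
next
  case (Suc n)
  have "\<forall>i<n. self_adjoint_mat r (S i)" "\<forall>i<n. involutive_mat r (S i)"
    "\<forall>i<n. \<forall>j<n. commuting_mat r (S i) (S j)"
    using Suc.prems by simp_all
  note IH = Suc.IH[OF this]
  obtain wp wm where "sign_moment_weights n r S (\<lambda>a. 1/2 * u a + 1/2 * matvec r (S n) u a) wp"
    and "sign_moment_weights n r S (\<lambda>a. 1/2 * u a + (-1/2) * matvec r (S n) u a) wm"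
    using IH by blast
  moreover have "involutive_mat r (S n)" using Suc.prems(2) by simp
  ultimately show ?case using sign_moment_weights_Suc[OF Suc.prems(1) _ Suc.prems(3)] by blast
qed

lemma gram_mat_in_cut_polytope:
  assumes sa: "\<forall>i<N. self_adjoint_mat r (S i)" and inv: "\<forall>i<N. involutive_mat r (S i)"
    and com: "\<forall>i<N. \<forall>j<N. commuting_mat r (S i) (S j)" and u: "dot r u u = 1"
    and v: "\<forall>i<N. v i \<in> carrier_vec r" and img: "\<forall>i<N. \<forall>b<r. v i $ b = matvec r (S i) u b"
  shows "gram_mat N v \<in> cut_polytope N"
proof -
  obtain w where "sign_moment_weights N r S u w" using sign_moment_weights_exist[OF sa inv com] ..
  then have w: "\<forall>x\<in>sign_vecs N. 0 \<le> w x" "(\<Sum>x\<in>sign_vecs N. w x) = dot r u u"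
    "\<forall>i<N. \<forall>j<N. (\<Sum>x\<in>sign_vecs N. w x * (x $ i * x $ j)) = dot r u (matvec r (S i) (matvec r (S j) u))"
    unfolding sign_moment_weights_def by blast+
  have "gram_mat N v $$ (i, j) = (\<Sum>x\<in>sign_vecs N. w x * (x $ i * x $ j))" if "i < N" "j < N" for i j
  proof -
    have "gram_mat N v $$ (i, j) = v i \<bullet> v j"
      unfolding gram_mat_def using that by simp
    also have "\<dots> = dot r (($) (v i)) (($) (v j))"
      using that v by (intro dot_vec_index) simp_all
    also have "\<dots> = dot r (matvec r (S i) u) (matvec r (S j) u)"
      using img that by (intro dot_cong) simp_all
    also have "\<dots> = dot r u (matvec r (S i) (matvec r (S j) u))"
      using sa that self_adjoint_matD by blast
    finally show ?thesis using w(3) that by simp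
  qed
  then show ?thesis
    unfolding cut_polytope_def using w(1,2) u
    by (intro CollectI conjI exI[of _ w] allI impI) (simp_all add: gram_mat_def)
qed

section \<open>Factorisation of the rank-r matrices in B(N, r)\<close>

lemma pick_insert_lessThan:
  assumes "r \<le> p" "x \<le> r"
  shows "pick (insert p {..<r}) x = (if x < r then x else p)"
  using assms(2)
proof (induction x)
  case 0
  then show ?case using assms(1) by (auto intro!: Least_equality)
next
  case (Suc x)
  then show ?case using assms(1) by (auto intro!: Least_equality)
qed

lemma bordered_identity_LU:
  fixes B :: "real mat"
  assumes B: "B \<in> carrier_mat (Suc r) (Suc r)"
    and id: "\<And>a b. a < r \<Longrightarrow> b < r \<Longrightarrow> B $$ (a, b) = (if a = b then 1 else 0)"
  defines "d \<equiv> B $$ (r, r) - (\<Sum>k<r. B $$ (r, k) * B $$ (k, r))"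
  defines "L \<equiv> mat (Suc r) (Suc r) (\<lambda>(x, y). if x = y then 1 else if x = r \<and> y < r then B $$ (r, y) else 0)"
    and "U \<equiv> mat (Suc r) (Suc r) (\<lambda>(x, y). if x < r then B $$ (x, y) else if y = r then d else 0)"
  shows "B = L * U"
proof -
  have L: "L \<in> carrier_mat (Suc r) (Suc r)" and U: "U \<in> carrier_mat (Suc r) (Suc r)"
    unfolding L_def U_def by auto
  have L_index: "L $$ (x, z) = (if x = z then 1 else if x = r \<and> z < r then B $$ (r, z) else 0)"
    and U_index: "U $$ (z, y) = (if z < r then B $$ (z, y) else if y = r then d else 0)"
    if "x < Suc r" "y < Suc r" "z < Suc r" for x y z
    using that unfolding L_def U_def by simp_all
  show "B = L * U"
  proof (rule eq_matI)
    fix x y assume "x < dim_row (L * U)" "y < dim_col (L * U)"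
    then have x: "x < Suc r" and y: "y < Suc r" using L U by auto
    have "(L * U) $$ (x, y) = (\<Sum>z<Suc r. L $$ (x, z) * U $$ (z, y))"
      using x y L U by (simp add: scalar_prod_def lessThan_atLeast0)
    also have "\<dots> = (\<Sum>z<r. L $$ (x, z) * U $$ (z, y)) + L $$ (x, r) * U $$ (r, y)"
      by simp
    also have "\<dots> = B $$ (x, y)"
    proof (cases "x < r")
      case True
      have "(\<Sum>z<r. L $$ (x, z) * U $$ (z, y)) = (\<Sum>z<r. if z = x then B $$ (x, y) else 0)"
        using True y by (intro sum.cong refl) (simp add: L_index U_index)
      then show ?thesis using True x y by (simp add: L_index)
    next
      case False
      then have "x = r" using x by simp
      have "(\<Sum>z<r. L $$ (x, z) * U $$ (z, y)) = (\<Sum>z<r. B $$ (r, z) * B $$ (z, y))"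
        using \<open>x = r\<close> y by (intro sum.cong refl) (simp add: L_index U_index)
      also have "\<dots> = (if y < r then B $$ (r, y) else B $$ (r, r) - d)"
      proof (cases "y < r")
        case True
        then have "(\<Sum>z<r. B $$ (r, z) * B $$ (z, y)) = (\<Sum>z<r. if z = y then B $$ (r, y) else 0)"
          by (intro sum.cong refl) (simp add: id)
        then show ?thesis using True by simp
      next
        case False
        then have "y = r" using y by simp
        then show ?thesis by (simp add: d_def)
      qed
      moreover have "L $$ (x, r) = 1" "U $$ (r, y) = (if y < r then 0 else d)"
        using \<open>x = r\<close> y by (simp_all add: L_index U_index)
      ultimately show ?thesis using \<open>x = r\<close> less_Suc_eq[THEN iffD1, OF y] by auto
    qed
    finally show "B $$ (x, y) = (L * U) $$ (x, y)" by simp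
  qed (use B L U in auto)
qed

lemma det_bordered_identity:
  fixes B :: "real mat"
  assumes B: "B \<in> carrier_mat (Suc r) (Suc r)"
    and id: "\<And>a b. a < r \<Longrightarrow> b < r \<Longrightarrow> B $$ (a, b) = (if a = b then 1 else 0)"
  shows "det B = B $$ (r, r) - (\<Sum>k<r. B $$ (r, k) * B $$ (k, r))"
proof -
  define d where "d = B $$ (r, r) - (\<Sum>k<r. B $$ (r, k) * B $$ (k, r))"
  define L where "L = mat (Suc r) (Suc r) (\<lambda>(x, y). if x = y then 1 else if x = r \<and> y < r then B $$ (r, y) else 0)"
  define U where "U = mat (Suc r) (Suc r) (\<lambda>(x, y). if x < r then B $$ (x, y) else if y = r then d else 0)"
  have L: "L \<in> carrier_mat (Suc r) (Suc r)" and U: "U \<in> carrier_mat (Suc r) (Suc r)"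
    unfolding L_def U_def by auto
  have "B = L * U"
    unfolding L_def U_def d_def by (rule bordered_identity_LU[OF B id])
  moreover have "det L = 1"
  proof -
    have "det L = prod_list (diag_mat L)" by (rule det_lower_triangular[OF _ L]) (auto simp: L_def)
    also have "diag_mat L = map (\<lambda>_. 1) [0..<Suc r]"
      unfolding diag_mat_def using L by (intro map_cong) (auto simp: L_def)
    finally show ?thesis by (simp add: map_replicate_const)
  qed
  moreover have "det U = d"
  proof -
    have "det U = prod_list (diag_mat U)" by (rule det_upper_triangular[OF _ U]) (auto simp: U_def id)
    also have "diag_mat U = map (\<lambda>_. 1) [0..<r] @ [d]"
      unfolding diag_mat_def using U by (auto simp: U_def id)
    finally show ?thesis by (simp add: map_replicate_const)
  qed
  ultimately show ?thesis using det_mult[OF L U] d_def by simp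
qed

text \<open>The minor on rows \<open>{..<r} \<union> {p}\<close> and columns \<open>{..<r} \<union> {q}\<close> is the Schur complement of the
  identity block, and it vanishes because the rank is at most \<open>r\<close>.\<close>

lemma factor_through_leading_block_if_rank_le:
  fixes M :: "real mat"
  assumes M: "M \<in> carrier_mat n n"
    and id: "\<And>a b. a < r \<Longrightarrow> b < r \<Longrightarrow> M $$ (a, b) = (if a = b then 1 else 0)"
    and rank: "vec_space.rank n M \<le> r" and p: "p < n" and q: "q < n"
  shows "M $$ (p, q) = (\<Sum>k<r. M $$ (p, k) * M $$ (k, q))"
proof (cases "p < r \<or> q < r")
  case True
  have "(\<Sum>k<r. M $$ (p, k) * M $$ (k, q)) = (\<Sum>k<r. if k = (if p < r then p else q) then M $$ (p, q) else 0)"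
    using True by (intro sum.cong) (auto simp: id)
  also have "\<dots> = M $$ (p, q)" using True by (cases "p < r") simp_all
  finally show ?thesis ..
next
  case False
  define I where "I = insert p {..<r}"
  define J where "J = insert q {..<r}"
  have "{i. i < n \<and> i \<in> I} = insert p {..<r}" "{j. j < n \<and> j \<in> J} = insert q {..<r}"
    using False p q unfolding I_def J_def by auto
  then have card: "card {i. i < dim_row M \<and> i \<in> I} = Suc r" "card {j. j < dim_col M \<and> j \<in> J} = Suc r"
    using False M by auto
  have B: "submatrix M I J \<in> carrier_mat (Suc r) (Suc r)"
    by (rule carrier_matI) (simp_all only: dim_submatrix card)
  have B_index: "submatrix M I J $$ (x, y) = M $$ (if x < r then x else p, if y < r then y else q)"
    if "x < Suc r" "y < Suc r" for x y
  proof -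
    have "submatrix M I J $$ (x, y) = M $$ (pick I x, pick J y)"
      using that card by (intro submatrix_index) simp_all
    moreover have "pick I x = (if x < r then x else p)" "pick J y = (if y < r then y else q)"
      unfolding I_def J_def using that False by (simp_all add: pick_insert_lessThan)
    ultimately show ?thesis by simp
  qed
  have "det (submatrix M I J) = M $$ (p, q) - (\<Sum>k<r. M $$ (p, k) * M $$ (k, q))"
    using det_bordered_identity[OF B] B_index id by simp
  moreover have "det (submatrix M I J) = 0"
  proof (rule ccontr)
    assume "det (submatrix M I J) \<noteq> 0"
    from vec_space.rank_gt_minor[OF M this] have "card {j. j < n \<and> j \<in> J} \<le> vec_space.rank n M" .
    then show False using card M rank by simp
  qed
  ultimately show ?thesis by simp
qed

lemma block_index_less:
  fixes i a r N :: nat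
  assumes "i < N" "a < r"
  shows "i * r + a < r * N"
proof -
  have "i * r + a < Suc i * r" using assms(2) by simp
  also have "\<dots> \<le> N * r" using assms(1) by (intro mult_le_mono1) simp
  finally show ?thesis by (simp add: mult.commute)
qed

lemma sum_lessThan_mult_blocks:
  fixes r N :: nat
  shows "(\<Sum>q<r * N. F q) = (\<Sum>j<N. \<Sum>b<r. F (j * r + b))"
proof (induction N)
  case (Suc N)
  have "{..<r * Suc N} = {..<r * N} \<union> {r * N..<r * N + r}" by auto
  then have "(\<Sum>q<r * Suc N. F q) = (\<Sum>q<r * N. F q) + (\<Sum>q\<in>{r * N..<r * N + r}. F q)"
    by (simp add: sum.union_disjoint[symmetric] ivl_disj_int)
  also have "(\<Sum>q\<in>{r * N..<r * N + r}. F q) = (\<Sum>b<r. F (N * r + b))"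
    using sum.shift_bounds_nat_ivl[of F 0 "r * N" r] by (simp add: atLeast0LessThan algebra_simps)
  finally show ?case using Suc by simp
qed simp

lemma index_concat_vecs: "j < N \<Longrightarrow> b < r \<Longrightarrow> concat_vecs r N v $ (j * r + b) = v j $ b"
  unfolding concat_vecs_def by (simp add: block_index_less)

lemma concat_vecs_quadratic_form:
  fixes M :: "real mat" and C :: "nat \<Rightarrow> nat \<Rightarrow> nat \<Rightarrow> real"
  assumes M: "M \<in> carrier_mat (r * N) (r * N)"
    and factor: "\<And>i j a b. i < N \<Longrightarrow> j < N \<Longrightarrow> a < r \<Longrightarrow> b < r \<Longrightarrow>
      M $$ (i * r + a, j * r + b) = (\<Sum>k<r. C i k a * C j k b)"
  shows "concat_vecs r N v \<bullet> (M *\<^sub>v concat_vecs r N v) = (\<Sum>k<r. (\<Sum>i<N. matvec r (C i) (($) (v i)) k)\<^sup>2)"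
proof -
  define V where "V = concat_vecs r N v"
  define Y where "Y k = (\<Sum>j<N. \<Sum>b<r. C j k b * v j $ b)" for k
  have inner: "(\<Sum>j<N. \<Sum>b<r. (\<Sum>k<r. C i k a * C j k b) * v j $ b) = (\<Sum>k<r. C i k a * Y k)" for i a
  proof -
    have "(\<Sum>j<N. \<Sum>b<r. (\<Sum>k<r. C i k a * C j k b) * v j $ b)
        = (\<Sum>j<N. \<Sum>k<r. \<Sum>b<r. C i k a * (C j k b * v j $ b))"
      unfolding sum_distrib_right by (rule sum.cong[OF refl], subst sum.swap) (simp add: mult.assoc)
    also have "\<dots> = (\<Sum>k<r. C i k a * Y k)"
      unfolding Y_def sum_distrib_left by (rule sum.swap)
    finally show ?thesis .
  qed
  have "V \<bullet> (M *\<^sub>v V) = (\<Sum>p<r * N. V $ p * (\<Sum>q<r * N. M $$ (p, q) * V $ q))"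
    using M unfolding V_def by (simp add: scalar_prod_def lessThan_atLeast0 concat_vecs_def mult.commute)
  also have "\<dots> = (\<Sum>i<N. \<Sum>a<r. v i $ a * (\<Sum>j<N. \<Sum>b<r. (\<Sum>k<r. C i k a * C j k b) * v j $ b))"
    unfolding sum_lessThan_mult_blocks[where F = "\<lambda>q. M $$ (_, q) * V $ q"]
    unfolding sum_lessThan_mult_blocks[where F = "\<lambda>p. V $ p * _ p"]
    by (intro sum.cong refl) (simp add: V_def index_concat_vecs factor)
  also have "\<dots> = (\<Sum>i<N. \<Sum>a<r. v i $ a * (\<Sum>k<r. C i k a * Y k))"
    using inner by simp
  also have "\<dots> = (\<Sum>i<N. \<Sum>k<r. \<Sum>a<r. C i k a * v i $ a * Y k)"
    unfolding sum_distrib_left by (rule sum.cong[OF refl], subst sum.swap) (simp add: algebra_simps)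
  also have "\<dots> = (\<Sum>k<r. Y k * Y k)"
    unfolding Y_def sum_distrib_right by (subst sum.swap) (simp add: sum_distrib_left)
  finally show ?thesis unfolding V_def Y_def matvec_def by (simp add: power2_eq_square)
qed

text \<open>Rank \<open>r\<close> forces \<open>M = C\<^sup>T C\<close> for the first block row \<open>C = (S 0 \<dots> S (N - 1))\<close>.\<close>

lemma B_set_rank_blocks:
  fixes M :: "real mat"
  assumes B: "M \<in> B_set N r" and rank: "mat_rank M = r" and N: "0 < N"
  defines "S \<equiv> \<lambda>i a b. M $$ (a, i * r + b)"
  shows "\<forall>i<N. self_adjoint_mat r (S i)" and "\<forall>i<N. involutive_mat r (S i)"
    and "\<forall>i<N. \<forall>j<N. commuting_mat r (S i) (S j)"
    and "\<And>i j a b. i < N \<Longrightarrow> j < N \<Longrightarrow> a < r \<Longrightarrow> b < r \<Longrightarrow>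
      M $$ (i * r + a, j * r + b) = (\<Sum>k<r. S i k a * S j k b)"
proof -
  have M: "M \<in> carrier_mat (r * N) (r * N)" and M_sym: "transpose_mat M = M"
    and diag: "\<And>i. i < N \<Longrightarrow> block_mat r M i i = 1\<^sub>m r"
    and block_sym: "\<And>i j. i < N \<Longrightarrow> j < N \<Longrightarrow> transpose_mat (block_mat r M i j) = block_mat r M i j"
    using B unfolding B_set_def by auto
  have M_swap: "M $$ (p, q) = M $$ (q, p)" if "p < r * N" "q < r * N" for p q
    using M_sym M that by (metis carrier_matD index_transpose_mat(1))
  have diag_entry: "M $$ (i * r + a, i * r + b) = (if a = b then 1 else 0)" if "i < N" "a < r" "b < r" for i a b
    using arg_cong[OF diag[OF that(1)], of "\<lambda>A. A $$ (a, b)"] that by (simp add: block_mat_def)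
  have block_swap: "M $$ (i * r + b, j * r + a) = M $$ (i * r + a, j * r + b)"
    if "i < N" "j < N" "a < r" "b < r" for i j a b
    using arg_cong[OF block_sym[OF that(1,2)], of "\<lambda>A. A $$ (a, b)"] that by (simp add: block_mat_def)
  have lt: "k < r * N" if "k < r" for k
    using block_index_less[OF N that] by simp
  have S_sym: "S i a b = S i b a" if "i < N" "a < r" "b < r" for i a b
    using block_swap[OF N that(1,2,3)] unfolding S_def by simp
  show factor: "M $$ (i * r + a, j * r + b) = (\<Sum>k<r. S i k a * S j k b)"
    if "i < N" "j < N" "a < r" "b < r" for i j a b
  proof -
    have "vec_space.rank (r * N) M \<le> r" using rank M unfolding mat_rank_def by simp
    then have "M $$ (i * r + a, j * r + b) = (\<Sum>k<r. M $$ (i * r + a, k) * M $$ (k, j * r + b))"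
      using diag_entry[OF N] that
      by (intro factor_through_leading_block_if_rank_le[OF M]) (auto simp: block_index_less)
    also have "\<dots> = (\<Sum>k<r. S i k a * S j k b)"
      unfolding S_def using that by (intro sum.cong refl) (simp add: M_swap block_index_less lt)
    finally show ?thesis .
  qed
  have matmul_S: "matmul r (S i) (S j) a b = M $$ (i * r + a, j * r + b)"
    if "i < N" "j < N" "a < r" "b < r" for i j a b
    unfolding matmul_def factor[OF that] using that by (intro sum.cong) (simp_all add: S_sym)
  show "\<forall>i<N. self_adjoint_mat r (S i)"
    using S_sym by (auto intro: self_adjoint_mat_if_symmetric)
  show "\<forall>i<N. involutive_mat r (S i)"
    by (auto intro!: involutive_mat_if_matmul_eq_idmat simp: matmul_S diag_entry idmat_def)
  have "M $$ (i * r + a, j * r + b) = M $$ (j * r + a, i * r + b)"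
    if "i < N" "j < N" "a < r" "b < r" for i j a b
    using M_swap[OF block_index_less block_index_less] block_swap that by metis
  then show "\<forall>i<N. \<forall>j<N. commuting_mat r (S i) (S j)"
    by (auto intro!: commuting_mat_if_matmul_eq simp: matmul_S)
qed

section \<open>The equality case of the Cauchy-Schwarz bound\<close>

lemma sum_sq_diff:
  fixes x :: "nat \<Rightarrow> real"
  shows "(\<Sum>i\<in>I. \<Sum>j\<in>I. (x i - x j)\<^sup>2) = 2 * real (card I) * (\<Sum>i\<in>I. (x i)\<^sup>2) - 2 * (\<Sum>i\<in>I. x i)\<^sup>2"
proof -
  have "(\<Sum>i\<in>I. \<Sum>j\<in>I. (x i - x j)\<^sup>2) = (\<Sum>i\<in>I. \<Sum>j\<in>I. (x i)\<^sup>2 + (x j)\<^sup>2 - 2 * (x i * x j))"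
    by (simp add: power2_diff algebra_simps)
  also have "\<dots> = (\<Sum>i\<in>I. \<Sum>j\<in>I. (x i)\<^sup>2) + (\<Sum>i\<in>I. \<Sum>j\<in>I. (x j)\<^sup>2) - 2 * (\<Sum>i\<in>I. \<Sum>j\<in>I. x i * x j)"
    by (simp add: sum.distrib sum_subtractf sum_distrib_left)
  also have "(\<Sum>i\<in>I. \<Sum>j\<in>I. x i * x j) = (\<Sum>i\<in>I. x i)\<^sup>2"
    by (simp add: power2_eq_square sum_product)
  finally show ?thesis by (simp add: sum_distrib_left[symmetric])
qed

lemma eq_if_sum_sq_eq_card_mult:
  fixes a :: "nat \<Rightarrow> nat \<Rightarrow> real"
  assumes eq: "(\<Sum>k<r. (\<Sum>i<N. a i k)\<^sup>2) = real N * (\<Sum>i<N. \<Sum>k<r. (a i k)\<^sup>2)"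
    and "i < N" "j < N" "k < r"
  shows "a i k = a j k"
proof -
  have "(\<Sum>k<r. \<Sum>i<N. \<Sum>j<N. (a i k - a j k)\<^sup>2)
      = 2 * real N * (\<Sum>k<r. \<Sum>i<N. (a i k)\<^sup>2) - 2 * (\<Sum>k<r. (\<Sum>i<N. a i k)\<^sup>2)"
    by (simp add: sum_sq_diff sum_subtractf sum_distrib_left)
  also have "(\<Sum>k<r. \<Sum>i<N. (a i k)\<^sup>2) = (\<Sum>i<N. \<Sum>k<r. (a i k)\<^sup>2)"
    by (rule sum.swap)
  finally have "(\<Sum>k<r. \<Sum>i<N. \<Sum>j<N. (a i k - a j k)\<^sup>2) = 0" using eq by simp
  then have "(\<Sum>i<N. \<Sum>j<N. (a i k - a j k)\<^sup>2) = 0"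
    using \<open>k < r\<close> by (subst (asm) sum_nonneg_eq_0_iff) (auto intro!: sum_nonneg)
  then have "(\<Sum>j<N. (a i k - a j k)\<^sup>2) = 0"
    using \<open>i < N\<close> by (subst (asm) sum_nonneg_eq_0_iff) (auto intro!: sum_nonneg)
  then have "(a i k - a j k)\<^sup>2 = 0"
    using \<open>j < N\<close> by (subst (asm) sum_nonneg_eq_0_iff) auto
  then show ?thesis by simp
qed

lemma common_preimage_of_involution_images:
  assumes N: "0 < N" and sa: "\<forall>i<N. self_adjoint_mat r (S i)" and inv: "\<forall>i<N. involutive_mat r (S i)"
    and v: "\<forall>i<N. v i \<in> carrier_vec r" and norm: "(\<Sum>i<N. v i \<bullet> v i) = real N"
    and sum: "(\<Sum>k<r. (\<Sum>i<N. matvec r (S i) (($) (v i)) k)\<^sup>2) = real N ^ 2"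
  shows "\<exists>u. dot r u u = 1 \<and> (\<forall>i<N. \<forall>b<r. v i $ b = matvec r (S i) u b)"
proof -
  define a where "a i = matvec r (S i) (($) (v i))" for i
  have "(\<Sum>k<r. (a i k)\<^sup>2) = v i \<bullet> v i" if "i < N" for i
  proof -
    have "(\<Sum>k<r. (a i k)\<^sup>2) = dot r (a i) (a i)" by (simp add: dot_def power2_eq_square)
    also have "\<dots> = dot r (($) (v i)) (($) (v i))"
      unfolding a_def using sa inv that by (simp add: dot_involution_isometry)
    also have "\<dots> = v i \<bullet> v i" using v that by (intro dot_vec_index[symmetric]) simp_all
    finally show ?thesis .
  qed
  then have "(\<Sum>i<N. \<Sum>k<r. (a i k)\<^sup>2) = (\<Sum>i<N. v i \<bullet> v i)" by simp
  then have "(\<Sum>k<r. (\<Sum>i<N. a i k)\<^sup>2) = real N * (\<Sum>i<N. \<Sum>k<r. (a i k)\<^sup>2)"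
    using norm sum unfolding a_def by (simp add: power2_eq_square)
  note a_eq = eq_if_sum_sq_eq_card_mult[OF this]
  define u where "u = a 0"
  have a_u: "a i k = u k" if "i < N" "k < r" for i k
    unfolding u_def using a_eq[OF that(1) N that(2)] .
  have "real N = (\<Sum>i<N. dot r (a i) (a i))"
    using \<open>(\<Sum>i<N. \<Sum>k<r. (a i k)\<^sup>2) = _\<close> norm by (simp add: dot_def power2_eq_square)
  also have "\<dots> = (\<Sum>i<N. dot r u u)"
    using a_u by (intro sum.cong refl dot_cong) simp_all
  finally have "dot r u u = 1" using N by simp
  moreover have "v i $ b = matvec r (S i) u b" if "i < N" "b < r" for i b
  proof -
    have "v i $ b = matvec r (S i) (a i) b"
      unfolding a_def using involutive_matD[of r "S i" b] inv that by simp
    also have "matvec r (S i) (a i) = matvec r (S i) u"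
      using a_u that by (intro matvec_cong) simp
    finally show ?thesis .
  qed
  ultimately show ?thesis by blast
qed

lemma B_set_rank_involution_images:
  assumes N: "0 < N" and v: "\<forall>i<N. v i \<in> carrier_vec r" and norm: "(\<Sum>i<N. v i \<bullet> v i) = real N"
    and M: "M \<in> B_set N r" "mat_rank M = r"
    and quad: "concat_vecs r N v \<bullet> (M *\<^sub>v concat_vecs r N v) = real N ^ 2"
  shows "\<exists>S u. (\<forall>i<N. self_adjoint_mat r (S i)) \<and> (\<forall>i<N. involutive_mat r (S i))
    \<and> (\<forall>i<N. \<forall>j<N. commuting_mat r (S i) (S j)) \<and> dot r u u = 1
    \<and> (\<forall>i<N. \<forall>b<r. v i $ b = matvec r (S i) u b)"
proof -
  define S where "S = (\<lambda>i a b. M $$ (a, i * r + b))"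
  have sa: "\<forall>i<N. self_adjoint_mat r (S i)" and inv: "\<forall>i<N. involutive_mat r (S i)"
    and com: "\<forall>i<N. \<forall>j<N. commuting_mat r (S i) (S j)"
    and factor: "\<And>i j a b. i < N \<Longrightarrow> j < N \<Longrightarrow> a < r \<Longrightarrow> b < r \<Longrightarrow>
      M $$ (i * r + a, j * r + b) = (\<Sum>k<r. S i k a * S j k b)"
    unfolding S_def using B_set_rank_blocks[OF M N] by simp_all
  have "M \<in> carrier_mat (r * N) (r * N)" using M unfolding B_set_def by simp
  then have "(\<Sum>k<r. (\<Sum>i<N. matvec r (S i) (($) (v i)) k)\<^sup>2) = real N ^ 2"
    using concat_vecs_quadratic_form[where C = S] factor quad by simp
  then obtain u where "dot r u u = 1" "\<forall>i<N. \<forall>b<r. v i $ b = matvec r (S i) u b"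
    using common_preimage_of_involution_images[OF N sa inv v norm] by blast
  then show ?thesis using sa inv com by blast
qed

section \<open>Orthonormal images force 4 to divide N\<close>

lemma projection_col_inner:
  assumes sym: "\<forall>a<n. \<forall>b<n. P a b = P b a" and idem: "\<forall>a<n. \<forall>b<n. matmul n P P a b = P a b"
    and "a < n" "b < n"
  shows "(\<Sum>c<n. P c a * P c b) = P a b"
proof -
  have "(\<Sum>c<n. P c a * P c b) = matmul n P P a b"
    unfolding matmul_def using sym \<open>a < n\<close> by (intro sum.cong) auto
  then show ?thesis using idem assms(3,4) by simp
qed

lemma projection_deflate:
  fixes P :: "nat \<Rightarrow> nat \<Rightarrow> real"
  assumes sym: "\<forall>a<n. \<forall>b<n. P a b = P b a" and idem: "\<forall>a<n. \<forall>b<n. matmul n P P a b = P a b"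
    and j: "j < n" and d: "P j j \<noteq> 0"
  defines "Q \<equiv> \<lambda>a b. P a b - P a j * P b j / P j j"
  shows "\<forall>a<n. \<forall>b<n. Q a b = Q b a" and "\<forall>a<n. \<forall>b<n. matmul n Q Q a b = Q a b"
    and "(\<Sum>a<n. Q a a) = (\<Sum>a<n. P a a) - 1"
proof -
  note gram = projection_col_inner[OF sym idem]
  show "\<forall>a<n. \<forall>b<n. Q a b = Q b a" using sym unfolding Q_def by (auto simp: mult.commute)
  show "\<forall>a<n. \<forall>b<n. matmul n Q Q a b = Q a b"
  proof (intro allI impI)
    fix a b assume a: "a < n" and b: "b < n"
    have "matmul n Q Q a b = (\<Sum>c<n. P c a * P c b) - P b j / P j j * (\<Sum>c<n. P c a * P c j)
        - P a j / P j j * (\<Sum>c<n. P c j * P c b) + P a j * P b j / (P j j * P j j) * (\<Sum>c<n. P c j * P c j)"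
    proof -
      have "matmul n Q Q a b = (\<Sum>c<n. P c a * P c b - P b j / P j j * (P c a * P c j)
          - P a j / P j j * (P c j * P c b) + P a j * P b j / (P j j * P j j) * (P c j * P c j))"
        unfolding matmul_def Q_def using sym a b j d by (intro sum.cong refl) (simp add: field_simps)
      then show ?thesis by (simp add: sum_subtractf sum.distrib sum_distrib_left)
    qed
    also have "\<dots> = P a b - P b j / P j j * P a j - P a j / P j j * P b j + P a j * P b j / P j j"
      using d sym a b j unfolding gram[OF a b] gram[OF a j] gram[OF j b] gram[OF j j] by simp
    also have "\<dots> = Q a b"
      unfolding Q_def by (simp add: field_simps)
    finally show "matmul n Q Q a b = Q a b" .
  qed
  show "(\<Sum>a<n. Q a a) = (\<Sum>a<n. P a a) - 1"
    using gram[OF j j] sym j d unfolding Q_def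
    by (simp add: sum_subtractf sum_divide_distrib[symmetric] power2_eq_square)
qed

lemma trace_projection_nat:
  fixes P :: "nat \<Rightarrow> nat \<Rightarrow> real"
  assumes "\<forall>a<n. \<forall>b<n. P a b = P b a" and "\<forall>a<n. \<forall>b<n. matmul n P P a b = P a b"
  shows "\<exists>m::nat. (\<Sum>a<n. P a a) = real m"
proof -
  have "(\<Sum>a<n. P a a) \<le> real k \<Longrightarrow> \<exists>m::nat. (\<Sum>a<n. P a a) = real m" for k
    using assms
  proof (induction k arbitrary: P)
    case 0
    have "0 \<le> P a a" if "a < n" for a
      unfolding projection_col_inner[OF "0.prems"(2,3) that that, symmetric] by (intro sum_nonneg) simp
    then have "0 \<le> (\<Sum>a<n. P a a)" by (intro sum_nonneg) simp
    then show ?case using "0.prems"(1) by (intro exI[of _ 0]) simp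
  next
    case (Suc k)
    show ?case
    proof (cases "\<exists>j<n. P j j \<noteq> 0")
      case False
      then show ?thesis by (intro exI[of _ 0]) simp
    next
      case True
      then obtain j where "j < n" "P j j \<noteq> 0" by blast
      note Q = projection_deflate[OF Suc.prems(2,3) this]
      obtain m where "(\<Sum>a<n. P a a) - 1 = real m"
        using Suc.IH[OF _ Q(1,2)] Suc.prems(1) unfolding Q(3) by fastforce
      then show ?thesis by (intro exI[of _ "Suc m"]) simp
    qed
  qed
  then show ?thesis using real_nat_ceiling_ge by blast
qed

definition plus_proj :: "(nat \<Rightarrow> nat \<Rightarrow> real) \<Rightarrow> nat \<Rightarrow> nat \<Rightarrow> real" where
  "plus_proj A a b = 1/2 * idmat a b + 1/2 * A a b"

lemma matvec_plus_proj: "a < n \<Longrightarrow> matvec n (plus_proj A) x a = 1/2 * x a + 1/2 * matvec n A x a"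
  using matvec_idmat[of a n x]
  unfolding plus_proj_def matvec_def by (simp add: algebra_simps sum.distrib sum_distrib_left)

lemma dot_plus_proj_left: "dot n (matvec n (plus_proj A) x) y = 1/2 * dot n x y + 1/2 * dot n (matvec n A x) y"
proof -
  have "dot n (matvec n (plus_proj A) x) y = dot n (\<lambda>a. 1/2 * x a + 1/2 * matvec n A x a) y"
    by (intro dot_cong) (simp_all add: matvec_plus_proj)
  then show ?thesis by (simp only: dot_lincomb_left)
qed

lemma self_adjoint_mat_plus_proj: "self_adjoint_mat n A \<Longrightarrow> self_adjoint_mat n (plus_proj A)"
  unfolding self_adjoint_mat_def using dot_plus_proj_left
  by (metis dot_commute)

lemma commuting_mat_plus_proj:
  assumes "commuting_mat n A C"
  shows "commuting_mat n (plus_proj A) C"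
  unfolding commuting_mat_def
proof (intro allI impI)
  fix x a assume a: "a < n"
  have "matvec n C (matvec n (plus_proj A) x) = matvec n C (\<lambda>b. 1/2 * x b + 1/2 * matvec n A x b)"
    by (intro matvec_cong) (simp add: matvec_plus_proj)
  also have "\<dots> = (\<lambda>b. 1/2 * matvec n C x b + 1/2 * matvec n C (matvec n A x) b)"
    by (rule matvec_lincomb)
  finally show "matvec n (plus_proj A) (matvec n C x) a = matvec n C (matvec n (plus_proj A) x) a"
    using commuting_matD[OF assms a] a by (simp add: matvec_plus_proj)
qed

lemma idempotent_mat_plus_proj:
  assumes "involutive_mat n A"
  shows "idempotent_mat n (plus_proj A)"
  unfolding idempotent_mat_def
proof (intro allI impI)
  fix x a assume a: "a < n"
  have "matvec n A (matvec n (plus_proj A) x) = matvec n A (\<lambda>b. 1/2 * x b + 1/2 * matvec n A x b)"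
    by (intro matvec_cong) (simp add: matvec_plus_proj)
  also have "\<dots> = (\<lambda>b. 1/2 * matvec n A x b + 1/2 * matvec n A (matvec n A x) b)"
    by (rule matvec_lincomb)
  finally show "matvec n (plus_proj A) (matvec n (plus_proj A) x) a = matvec n (plus_proj A) x a"
    using involutive_matD[OF assms a] a by (simp add: matvec_plus_proj field_simps)
qed

lemma dot_double_plus_proj:
  assumes S: "self_adjoint_mat n S" "involutive_mat n S" and T: "self_adjoint_mat n T" "commuting_mat n S T"
  shows "dot n u (matvec n (matmul n (plus_proj (matmul n S T)) (plus_proj (matmul n S R))) u) =
    (dot n u u + dot n (matvec n S u) (matvec n T u) + dot n (matvec n S u) (matvec n R u)
      + dot n (matvec n T u) (matvec n R u)) / 4"
proof -
  let ?S = "matvec n S" and ?T = "matvec n T" and ?R = "matvec n R"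
  have "self_adjoint_mat n (plus_proj (matmul n S T))"
    by (intro self_adjoint_mat_plus_proj self_adjoint_mat_matmul S T)
  then have "dot n u (matvec n (matmul n (plus_proj (matmul n S T)) (plus_proj (matmul n S R))) u)
      = dot n (matvec n (plus_proj (matmul n S T)) u) (matvec n (plus_proj (matmul n S R)) u)"
    by (simp add: matvec_matmul self_adjoint_matD)
  also have "\<dots> = dot n (\<lambda>a. 1/2 * u a + 1/2 * ?S (?T u) a) (\<lambda>a. 1/2 * u a + 1/2 * ?S (?R u) a)"
    by (intro dot_cong) (simp_all add: matvec_plus_proj matvec_matmul)
  also have "\<dots> = (dot n u u + dot n u (?S (?R u)) + dot n (?S (?T u)) u + dot n (?S (?T u)) (?S (?R u))) / 4"
    unfolding dot_lincomb_left dot_lincomb_right by (simp add: field_simps)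
  also have "dot n u (?S (?R u)) = dot n (?S u) (?R u)"
    using self_adjoint_matD[OF S(1)] by simp
  also have "dot n (?S (?T u)) u = dot n (?S u) (?T u)"
    using self_adjoint_matD[OF S(1), of "?T u" u] by (simp add: dot_commute)
  also have "dot n (?S (?T u)) (?S (?R u)) = dot n (?T u) (?S (?S (?R u)))"
    using self_adjoint_matD[OF S(1)] .
  also have "\<dots> = dot n (?T u) (?R u)"
    using involutive_matD[OF S(2)] by (intro dot_cong) simp_all
  finally show ?thesis by simp
qed

lemma double_plus_proj_orthogonal_projection:
  assumes S: "self_adjoint_mat n S" "involutive_mat n S" and T: "self_adjoint_mat n T" "involutive_mat n T"
    and R: "self_adjoint_mat n R" "involutive_mat n R"
    and ST: "commuting_mat n S T" and SR: "commuting_mat n S R" and TR: "commuting_mat n T R"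
  defines "P \<equiv> matmul n (plus_proj (matmul n S T)) (plus_proj (matmul n S R))"
  shows "self_adjoint_mat n P" and "idempotent_mat n P"
    and "\<And>C. commuting_mat n S C \<Longrightarrow> commuting_mat n T C \<Longrightarrow> commuting_mat n R C \<Longrightarrow> commuting_mat n P C"
proof -
  have H_com: "commuting_mat n (plus_proj (matmul n A B)) C"
    if "commuting_mat n A C" "commuting_mat n B C" for A B C
    using that by (intro commuting_mat_plus_proj commuting_mat_matmul)
  have "commuting_mat n (plus_proj (matmul n S T)) S" "commuting_mat n (plus_proj (matmul n S T)) R"
    using H_com commuting_mat_refl commuting_mat_sym[OF ST] SR TR by blast+
  then have "commuting_mat n (plus_proj (matmul n S R)) (plus_proj (matmul n S T))"
    using H_com commuting_mat_sym by blast
  then have H12: "commuting_mat n (plus_proj (matmul n S T)) (plus_proj (matmul n S R))"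
    by (rule commuting_mat_sym)
  show "self_adjoint_mat n P"
    unfolding P_def using S T R ST SR H12
    by (intro self_adjoint_mat_matmul self_adjoint_mat_plus_proj)
  show "idempotent_mat n P"
    unfolding P_def using S T R ST SR H12
    by (intro idempotent_mat_matmul idempotent_mat_plus_proj involutive_mat_matmul)
  show "commuting_mat n P C"
    if "commuting_mat n S C" "commuting_mat n T C" "commuting_mat n R C" for C
    unfolding P_def using that by (intro commuting_mat_matmul H_com)
qed

text \<open>\<open>P\<close> projects onto the common \<open>+1\<close>-eigenspace of \<open>S 0 S 1\<close> and \<open>S 0 S 2\<close>; conjugating by
  \<open>S a\<close> shows that every diagonal entry of \<open>P\<close> equals \<open>u\<^sup>T P u = 1/4\<close>, so \<open>trace P = n/4\<close>.\<close>

lemma four_dvd_if_involutions_map_to_basis: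
  assumes n: "3 \<le> n" and sa: "\<forall>i<n. self_adjoint_mat n (S i)" and inv: "\<forall>i<n. involutive_mat n (S i)"
    and com: "\<forall>i<n. \<forall>j<n. commuting_mat n (S i) (S j)"
    and u: "dot n u u = 1" and basis: "\<forall>i<n. \<forall>b<n. matvec n (S i) u b = idmat i b"
  shows "4 dvd n"
proof -
  have Su: "dot n (matvec n (S i) u) x = x i" if "i < n" for i x
    using basis that by (simp add: dot_idmat dot_cong[of n _ "idmat i" x x])
  have "0 < n" "1 < n" "2 < n" using n by auto
  define P where "P = matmul n (plus_proj (matmul n (S 0) (S 1))) (plus_proj (matmul n (S 0) (S 2)))"
  note P = double_plus_proj_orthogonal_projection[of n "S 0" "S 1" "S 2", folded P_def]
  have P_sa: "self_adjoint_mat n P" and P_idem: "idempotent_mat n P"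
    and P_com: "\<And>a. a < n \<Longrightarrow> commuting_mat n P (S a)"
    using P sa inv com \<open>0 < n\<close> \<open>1 < n\<close> \<open>2 < n\<close> by simp_all
  have "dot n u (matvec n P u) = 1/4"
    unfolding P_def using sa inv com \<open>0 < n\<close> \<open>1 < n\<close> \<open>2 < n\<close>
    by (subst dot_double_plus_proj) (simp_all add: u Su basis idmat_def)
  then have diag: "P a a = 1/4" if "a < n" for a
  proof -
    have "P a a = dot n (idmat a) (matvec n P (idmat a))"
      using that by (simp add: dot_idmat matvec_idmat_col)
    also have "\<dots> = dot n (matvec n (S a) u) (matvec n P (matvec n (S a) u))"
    proof -
      have e: "idmat a b = matvec n (S a) u b" if "b < n" for b
        using basis \<open>a < n\<close> that by simp
      have "matvec n P (idmat a) = matvec n P (matvec n (S a) u)" by (rule matvec_cong) (rule e)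
      then show ?thesis by (intro dot_cong) (simp_all add: e)
    qed
    also have "\<dots> = dot n u (matvec n P u)"
      using dot_conj_involution[OF _ _ P_com[OF that]] sa inv that by simp
    finally show ?thesis using \<open>dot n u (matvec n P u) = 1/4\<close> by simp
  qed
  obtain m :: nat where "(\<Sum>a<n. P a a) = real m"
    using trace_projection_nat[of n P] symmetric_if_self_adjoint_mat[OF P_sa]
      matmul_eq_if_idempotent_mat[OF P_idem] by blast
  then have "real n = 4 * real m" using diag by simp
  then show ?thesis by (metis dvd_triv_left of_nat_eq_iff of_nat_mult of_nat_numeral)
qed

lemma gram_mat_in_cut_polytope_if_B_set_rank:
  assumes v: "\<forall>i<N. v i \<in> carrier_vec r" and norm: "(\<Sum>i<N. v i \<bullet> v i) = real N"
    and M: "M \<in> B_set N r" "mat_rank M = r"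
    and quad: "concat_vecs r N v \<bullet> (M *\<^sub>v concat_vecs r N v) = real N ^ 2"
  shows "gram_mat N v \<in> cut_polytope N"
proof (cases "N = 0")
  case True
  show ?thesis unfolding cut_polytope_def True
    by (intro CollectI conjI exI[of _ "\<lambda>_. 1"]) (simp_all add: gram_mat_def sign_vecs_0)
next
  case False
  then show ?thesis
    using B_set_rank_involution_images[OF _ v norm M quad] gram_mat_in_cut_polytope[OF _ _ _ _ v] by blast
qed

lemma unit_vecs_quadratic_form_ne:
  assumes N: "N \<notin> {1, 2}" "\<not> 4 dvd N" and M: "M \<in> B_set N N" "mat_rank M = N"
  shows "concat_vecs N N (\<lambda>i. unit_vec N i) \<bullet> (M *\<^sub>v concat_vecs N N (\<lambda>i. unit_vec N i)) \<noteq> real N ^ 2"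
proof
  assume quad: "concat_vecs N N (\<lambda>i. unit_vec N i) \<bullet> (M *\<^sub>v concat_vecs N N (\<lambda>i. unit_vec N i)) = real N ^ 2"
  have "3 \<le> N" using N by (cases "N = 0") auto
  obtain S u where "\<forall>i<N. self_adjoint_mat N (S i)" "\<forall>i<N. involutive_mat N (S i)"
    "\<forall>i<N. \<forall>j<N. commuting_mat N (S i) (S j)" "dot N u u = 1"
    and img: "\<forall>i<N. \<forall>b<N. unit_vec N i $ b = matvec N (S i) u b"
    using B_set_rank_involution_images[of N "\<lambda>i. unit_vec N i", OF _ _ _ M quad] \<open>3 \<le> N\<close> by auto
  moreover have "\<forall>i<N. \<forall>b<N. matvec N (S i) u b = idmat i b"
    using img[rule_format, symmetric] by (simp add: idmat_def)
  ultimately have "4 dvd N" using four_dvd_if_involutions_map_to_basis[OF \<open>3 \<le> N\<close>] by blast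
  then show False using N by simp
qed

theorem proposition9:
  shows "(\<forall>(N::nat) (r::nat) (v :: nat \<Rightarrow> real vec).
            (\<forall>i<N. v i \<in> carrier_vec r) \<longrightarrow>
            (\<Sum>i<N. v i \<bullet> v i) = real N \<longrightarrow>
            (\<exists>M \<in> B_set N r. mat_rank M = r \<and>
               concat_vecs r N v \<bullet> (M *\<^sub>v concat_vecs r N v) = real N ^ 2) \<longrightarrow>
            gram_mat N v \<in> cut_polytope N)
       \<and> (\<forall>N::nat. N \<notin> {1, 2} \<and> \<not> (4 dvd N) \<longrightarrow>
            1\<^sub>m N \<in> cut_polytope N \<and>
            1\<^sub>m N = gram_mat N (\<lambda>i. unit_vec N i) \<and>
            \<not> (\<exists>M \<in> B_set N N.
                 concat_vecs N N (\<lambda>i. unit_vec N i) \<bullet> (M *\<^sub>v concat_vecs N N (\<lambda>i. unit_vec N i)) = real N ^ 2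
                 \<and> mat_rank M = N))"
proof (intro conjI allI impI)
  fix N r :: nat and v :: "nat \<Rightarrow> real vec"
  assume "\<forall>i<N. v i \<in> carrier_vec r" "(\<Sum>i<N. v i \<bullet> v i) = real N"
    "\<exists>M \<in> B_set N r. mat_rank M = r \<and> concat_vecs r N v \<bullet> (M *\<^sub>v concat_vecs r N v) = real N ^ 2"
  then show "gram_mat N v \<in> cut_polytope N"
    using gram_mat_in_cut_polytope_if_B_set_rank by blast
next
  fix N :: nat
  assume N: "N \<notin> {1, 2} \<and> \<not> 4 dvd N"
  show "1\<^sub>m N \<in> cut_polytope N" by (rule one_mat_in_cut_polytope)
  show "1\<^sub>m N = gram_mat N (\<lambda>i. unit_vec N i)"
    unfolding gram_mat_def by (rule eq_matI) auto
  show "\<not> (\<exists>M \<in> B_set N N. concat_vecs N N (\<lambda>i. unit_vec N i) \<bullet> (M *\<^sub>v concat_vecs N N (\<lambda>i. unit_vec N i)) = real N ^ 2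
                 \<and> mat_rank M = N)"
    using unit_vecs_quadratic_form_ne N by blast
qed

end
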